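(* Let arm $i$ be a Markov decision process with finite state space $\mathcal{S}_i$, reward function $R_i:\mathcal{S}_i\to\mathbb{R}$, passive-action transition probabilities $P^{i0}_{ss'}$, and for each worker $j$ an intervention cost $c_{ij}>0$ and active-action transition probabilities $P^{ij}_{ss'}$. Let $j$ and $j'$ be two workers such that $c_{ij}\neq c_{ij'}$ and $P^{ij}_{ss'}=P^{ij'}_{ss'}$ for every $s,s'\in\mathcal{S}_i$. Then their Whittle indices are inversely proportional to their costs: for each state $s\in\mathcal{S}_i$, \[\frac{\lambda^\star_{ij}(s)}{\lambda^\star_{ij'}(s)}=\frac{c_{ij'}}{c_{ij}}.\]
   Context: For an arm $i$ and worker $j$, consider the two-action MDP with action set $\{0,j\}$ (0 = no intervention, $j$ = intervention by worker $j$). For a charge $\lambda\ge 0$, the augmented reward is $R_i(s)-\lambda c_{ij}$ if action $j$ is taken in state $s$ and $R_i(s)$ if action $0$ is taken; transitions are $P^{ij}_{ss'}$ under action $j$ and $P^{i0}_{ss'}$ under action $0$. Let $V_{i,j}(s,\lambda,a)$ denote the value of taking action $a\in\{0,j\}$ in state $s$ and acting optimally thereafter in this MDP, i.e. $V_{i,j}(s,\lambda,j)=R_i(s)-\lambda c_{ij}+\sum_{s'}P^{ij}_{ss'}V_{i,j}(s',\lambda)$ and $V_{i,j}(s,\lambda,0)=R_i(s)+\sum_{s'}P^{i0}_{ss'}V_{i,j}(s',\lambda)$, with $V_{i,j}(s',\lambda)=\max_{a\in\{0,j\}}V_{i,j}(s',\lambda,a)$. The (decoupled) Whittle index of worker $j$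 on arm $i$ at state $s$ is $\lambda^\star_{ij}(s)=\min\{\lambda : V_{i,j}(s,\lambda,j)=V_{i,j}(s,\lambda,0)\}$. *)

theory Defs
  imports Main "HOL-Analysis.Analysis"
begin

text \<open>Two-action MDP of arm i with worker j: passive transitions P0, active transitions Pj,
  intervention cost c, discount factor beta. Value functions are indexed by the charge lambda:
  V lambda s.\<close>

definition stochastic :: "('s::finite \<Rightarrow> 's \<Rightarrow> real) \<Rightarrow> bool" where
  "stochastic P \<longleftrightarrow> (\<forall>s s'. 0 \<le> P s s') \<and> (\<forall>s. (\<Sum>s'\<in>UNIV. P s s') = 1)"

definition Q_act :: "('s::finite \<Rightarrow> real) \<Rightarrow> ('s \<Rightarrow> 's \<Rightarrow> real) \<Rightarrow> real \<Rightarrow> real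
    \<Rightarrow> (real \<Rightarrow> 's \<Rightarrow> real) \<Rightarrow> 's \<Rightarrow> real \<Rightarrow> real" where
  "Q_act R Pj c beta V s lam = R s - lam * c + beta * (\<Sum>s'\<in>UNIV. Pj s s' * V lam s')"

definition Q_pass :: "('s::finite \<Rightarrow> real) \<Rightarrow> ('s \<Rightarrow> 's \<Rightarrow> real) \<Rightarrow> real
    \<Rightarrow> (real \<Rightarrow> 's \<Rightarrow> real) \<Rightarrow> 's \<Rightarrow> real \<Rightarrow> real" where
  "Q_pass R P0 beta V s lam = R s + beta * (\<Sum>s'\<in>UNIV. P0 s s' * V lam s')"

definition is_value_fn :: "('s::finite \<Rightarrow> real) \<Rightarrow> ('s \<Rightarrow> 's \<Rightarrow> real) \<Rightarrow> ('s \<Rightarrow> 's \<Rightarrow> real)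
    \<Rightarrow> real \<Rightarrow> real \<Rightarrow> (real \<Rightarrow> 's \<Rightarrow> real) \<Rightarrow> bool" where
  "is_value_fn R P0 Pj c beta V \<longleftrightarrow>
     (\<forall>lam \<ge> 0. \<forall>s. V lam s = max (Q_act R Pj c beta V s lam) (Q_pass R P0 beta V s lam))"

definition is_whittle_index :: "('s::finite \<Rightarrow> real) \<Rightarrow> ('s \<Rightarrow> 's \<Rightarrow> real) \<Rightarrow> ('s \<Rightarrow> 's \<Rightarrow> real)
    \<Rightarrow> real \<Rightarrow> real \<Rightarrow> (real \<Rightarrow> 's \<Rightarrow> real) \<Rightarrow> 's \<Rightarrow> real \<Rightarrow> bool" where
  "is_whittle_index R P0 Pj c beta V s lam \<longleftrightarrow>
     0 \<le> lam \<and> Q_act R Pj c beta V s lam = Q_pass R P0 beta V s lam \<and>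
     (\<forall>mu \<ge> 0. Q_act R Pj c beta V s mu = Q_pass R P0 beta V s mu \<longrightarrow> lam \<le> mu)"

end

theory Submission
  imports Defs
begin

text \<open>For fixed transitions, the charge enters the augmented MDP only through the product
  \<open>\<lambda> * c\<close>. The Bellman operator is a \<open>\<beta>\<close>-contraction in the sup norm, so its fixed point is
  unique; hence the value functions for costs \<open>c\<close> and \<open>d\<close> satisfy \<open>V \<lambda> = W \<mu>\<close> whenever
  \<open>\<lambda> * c = \<mu> * d\<close>, and the sets of indifference charges correspond under \<open>\<lambda> \<mapsto> \<lambda> * c / d\<close>.
  Taking minima gives \<open>c * \<lambda>\<^sub>1 = d * \<lambda>\<^sub>2\<close> for the two Whittle indices.\<close>

definition bellman_op :: "('s::finite \<Rightarrow> real) \<Rightarrow> ('s \<Rightarrow> 's \<Rightarrow> real) \<Rightarrow> ('s \<Rightarrow> 's \<Rightarrow> real)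
    \<Rightarrow> real \<Rightarrow> real \<Rightarrow> ('s \<Rightarrow> real) \<Rightarrow> 's \<Rightarrow> real" where
  "bellman_op R P0 P1 cost beta f s =
     max (R s - cost + beta * (\<Sum>s'\<in>UNIV. P1 s s' * f s')) (R s + beta * (\<Sum>s'\<in>UNIV. P0 s s' * f s'))"

lemma is_value_fn_iff_bellman_fixpoint:
  "is_value_fn R P0 P c beta V \<longleftrightarrow> (\<forall>lam \<ge> 0. bellman_op R P0 P (lam * c) beta (V lam) = V lam)"
  unfolding is_value_fn_def Q_act_def Q_pass_def bellman_op_def fun_eq_iff
  by (simp only: eq_commute[of "V _ _"])

lemma stochastic_sum_diff_le:
  fixes f g :: "'s::finite \<Rightarrow> real"
  assumes "stochastic P" and "\<forall>s'. \<bar>f s' - g s'\<bar> \<le> M"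
  shows "\<bar>(\<Sum>s'\<in>UNIV. P s s' * f s') - (\<Sum>s'\<in>UNIV. P s s' * g s')\<bar> \<le> M"
proof -
  have nonneg: "\<forall>s'. 0 \<le> P s s'" and one: "(\<Sum>s'\<in>UNIV. P s s') = 1"
    using assms(1) unfolding stochastic_def by auto
  have "\<bar>(\<Sum>s'\<in>UNIV. P s s' * f s') - (\<Sum>s'\<in>UNIV. P s s' * g s')\<bar>
      = \<bar>\<Sum>s'\<in>UNIV. P s s' * (f s' - g s')\<bar>"
    by (simp add: sum_subtractf right_diff_distrib)
  also have "\<dots> \<le> (\<Sum>s'\<in>UNIV. \<bar>P s s' * (f s' - g s')\<bar>)"
    by (rule sum_abs)
  also have "\<dots> \<le> (\<Sum>s'\<in>UNIV. P s s' * M)"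
  proof (rule sum_mono)
    show "\<bar>P s s' * (f s' - g s')\<bar> \<le> P s s' * M" for s'
      using nonneg assms(2) by (simp add: abs_mult mult_left_mono)
  qed
  also have "\<dots> = M"
    using one by (simp add: sum_distrib_right[symmetric])
  finally show ?thesis .
qed

lemma abs_max_diff_le: "\<bar>max (a::real) b - max c d\<bar> \<le> max \<bar>a - c\<bar> \<bar>b - d\<bar>"
  by (cases "a \<le> b"; cases "c \<le> d") (auto simp: max_def)

lemma bellman_op_contraction:
  assumes "stochastic P0" and "stochastic P1" and "0 \<le> beta"
    and "\<forall>s'. \<bar>f s' - g s'\<bar> \<le> M"
  shows "\<bar>bellman_op R P0 P1 cost beta f s - bellman_op R P0 P1 cost beta g s\<bar> \<le> beta * M"
proof -
  have expectation_le: "\<bar>beta * (\<Sum>s'\<in>UNIV. P s s' * f s') - beta * (\<Sum>s'\<in>UNIV. P s s' * g s')\<bar>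
      \<le> beta * M" if "stochastic P" for P
    using stochastic_sum_diff_le[OF that assms(4), of s] assms(3)
    by (simp add: right_diff_distrib[symmetric] abs_mult mult_left_mono)
  show ?thesis
    unfolding bellman_op_def
    using abs_max_diff_le expectation_le[OF assms(1)] expectation_le[OF assms(2)]
    by (smt (verit))
qed

lemma contraction_fixpoint_unique:
  fixes T :: "('s::finite \<Rightarrow> real) \<Rightarrow> 's \<Rightarrow> real"
  assumes contraction: "\<And>M s. \<forall>s'. \<bar>f s' - g s'\<bar> \<le> M \<Longrightarrow> \<bar>T f s - T g s\<bar> \<le> beta * M"
    and "beta < 1" and "T f = f" and "T g = g"
  shows "f = g"
proof -
  define M where "M = Max (range (\<lambda>s. \<bar>f s - g s\<bar>))"
  have bound: "\<forall>s. \<bar>f s - g s\<bar> \<le> M"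
    unfolding M_def by (auto intro: Max_ge)
  have "M \<in> range (\<lambda>s. \<bar>f s - g s\<bar>)"
    unfolding M_def by (rule Max_in) auto
  then obtain s0 where s0: "M = \<bar>f s0 - g s0\<bar>"
    by blast
  have "M \<le> beta * M"
    using contraction[OF bound, of s0] s0 assms(3,4) by simp
  with s0 \<open>beta < 1\<close> have "M = 0"
    by (smt (verit) mult_right_less_imp_less mult_cancel_right1)
  with bound show ?thesis
    by force
qed

lemma value_fn_charge_scaling:
  assumes "stochastic P0" and "stochastic P" and "0 \<le> beta" and "beta < 1"
    and "is_value_fn R P0 P c beta V" and "is_value_fn R P0 P d beta W"
    and "0 \<le> lam" and "0 \<le> mu" and "lam * c = mu * d"
  shows "V lam = W mu"
proof -
  let ?T = "bellman_op R P0 P (lam * c) beta"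
  have contraction: "\<bar>?T (V lam) s - ?T (W mu) s\<bar> \<le> beta * M"
    if "\<forall>s'. \<bar>V lam s' - W mu s'\<bar> \<le> M" for M s
    by (rule bellman_op_contraction[OF assms(1-3) that])
  have fixpoint_V: "?T (V lam) = V lam"
    using assms(5,7) unfolding is_value_fn_iff_bellman_fixpoint by blast
  have fixpoint_W: "?T (W mu) = W mu"
    using assms(6,8) unfolding is_value_fn_iff_bellman_fixpoint assms(9) by blast
  show ?thesis
    by (rule contraction_fixpoint_unique[where T = ?T, OF contraction assms(4) fixpoint_V fixpoint_W])
qed

lemma indifference_charge_scaling:
  assumes "stochastic P0" and "stochastic P" and "0 \<le> beta" and "beta < 1"
    and "is_value_fn R P0 P c beta V" and "is_value_fn R P0 P d beta W"
    and "0 \<le> lam" and "0 \<le> mu" and "lam * c = mu * d"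
  shows "Q_act R P c beta V s lam = Q_pass R P0 beta V s lam
     \<longleftrightarrow> Q_act R P d beta W s mu = Q_pass R P0 beta W s mu"
  using value_fn_charge_scaling[OF assms] assms(9) by (simp add: Q_act_def Q_pass_def)

lemma whittle_index_scaled_le:
  assumes "stochastic P0" and "stochastic P" and "0 \<le> beta" and "beta < 1"
    and "c > 0" and "d > 0"
    and "is_value_fn R P0 P c beta V" and "is_value_fn R P0 P d beta W"
    and "is_whittle_index R P0 P c beta V s lam"
    and "is_whittle_index R P0 P d beta W s mu"
  shows "d * mu \<le> c * lam"
proof -
  define mu' where "mu' = lam * c / d"
  have lam: "0 \<le> lam" "Q_act R P c beta V s lam = Q_pass R P0 beta V s lam"
    using assms(9) unfolding is_whittle_index_def by auto
  have "0 \<le> mu'" and scaled: "lam * c = mu' * d"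
    using lam(1) assms(5,6) unfolding mu'_def by auto
  then have "Q_act R P d beta W s mu' = Q_pass R P0 beta W s mu'"
    using indifference_charge_scaling[OF assms(1-4,7,8) lam(1)] lam(2) by blast
  with \<open>0 \<le> mu'\<close> have "mu \<le> mu'"
    using assms(10) unfolding is_whittle_index_def by blast
  then show ?thesis
    using assms(6) scaled by (simp add: mult.commute mult_left_mono)
qed

theorem theorem1:
  fixes R :: "'s::finite \<Rightarrow> real"
    and P0 :: "'s \<Rightarrow> 's \<Rightarrow> real"
    and P :: "'w \<Rightarrow> 's \<Rightarrow> 's \<Rightarrow> real"
    and c :: "'w \<Rightarrow> real"
    and beta :: real
    and V :: "'w \<Rightarrow> real \<Rightarrow> 's \<Rightarrow> real"
    and j j' :: 'w
    and s :: 's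
    and lam1 lam2 :: real
  assumes "stochastic P0"
    and "\<forall>w. stochastic (P w)"
    and "\<forall>w. c w > 0"
    and "0 \<le> beta" and "beta < 1"
    and "\<forall>w. is_value_fn R P0 (P w) (c w) beta (V w)"
    and "c j \<noteq> c j'"
    and "\<forall>s s'. P j s s' = P j' s s'"
    and "is_whittle_index R P0 (P j) (c j) beta (V j) s lam1"
    and "is_whittle_index R P0 (P j') (c j') beta (V j') s lam2"
  shows "c j * lam1 = c j' * lam2 \<and> (lam2 \<noteq> 0 \<longrightarrow> lam1 / lam2 = c j' / c j)"
proof -
  have same_P: "P j' = P j"
    using assms(8) by (intro ext) auto
  note setting = assms(1) assms(2)[rule_format, of j] assms(4,5)
  note value_fns = assms(6)[rule_format, of j] assms(6)[rule_format, of j', unfolded same_P]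
  note indices = assms(9) assms(10)[unfolded same_P]
  have "c j' * lam2 \<le> c j * lam1"
    using whittle_index_scaled_le[OF setting assms(3)[rule_format] assms(3)[rule_format] value_fns indices] .
  moreover have "c j * lam1 \<le> c j' * lam2"
    using whittle_index_scaled_le[OF setting assms(3)[rule_format] assms(3)[rule_format]
        value_fns(2,1) indices(2,1)] .
  ultimately have scaled: "c j * lam1 = c j' * lam2"
    by simp
  moreover have "lam2 \<noteq> 0 \<longrightarrow> lam1 / lam2 = c j' / c j"
    using scaled assms(3)[rule_format, of j] by (auto simp: field_simps)
  ultimately show ?thesis ..
qed

end
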